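(* Let $p$ be $(12,\emptyset,\{0,1\})$ or $(12,\emptyset,\{0,2\})$, or any pattern in the same symmetry class as one of these. Then for all $n\ge2$, $a_n(p)=n!/2$.
   Context: For $n\ge1$, $\mathcal S_n$ is the set of permutations $\pi=\pi_1\cdots\pi_n$ of $[n]$. A bi-vincular pattern of length $k$ is a triple $p=(\sigma,X,Y)$ with $\sigma\in\mathcal S_k$ and $X,Y\subseteq\{0,1,\dots,k\}$. A permutation $\pi\in\mathcal S_n$ contains $p$ if there are indices $1\le i_1<\dots<i_k\le n$ such that $(\pi_{i_1},\dots,\pi_{i_k})$ is order-isomorphic to $\sigma$ and, letting $j_1<\dots<j_k$ be the values $\pi_{i_1},\dots,\pi_{i_k}$ sorted increasingly and setting $i_0=j_0=0$, $i_{k+1}=j_{k+1}=n+1$, one has $i_{x+1}=i_x+1$ for all $x\in X$ and $j_{y+1}=j_y+1$ for all $y\in Y$. Otherwise $\pi$ avoids $p$; $a_n(p)$ is the number of $\pi\in\mathcal S_n$ avoiding $p$. Symmetries: $p^{i}=(\sigma^{-1},Y,X)$, $p^{r}=(\sigma^{r},\{k-x:x\in X\},Y)$, $p^{c}=(\sigma^{c},X,\{k-y:y\in Y\})$ with $\sigma^r_j=\sigma_{k+1-j}$, $\sigma^c_j=k+1-\sigma_j$; the symmetry class of $p$ consists of all patterns obtained from $p$ by finitely many applications of these maps. *)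

theory Defs
  imports Main
begin

(* Permutations of [n] in one-line notation, as lists: pi ! (j-1) is pi_j. *)
definition perms :: "nat \<Rightarrow> nat list set" where
  "perms n = {\<pi>. distinct \<pi> \<and> set \<pi> = {1..n}}"

type_synonym bvpat = "nat list \<times> nat set \<times> nat set"

definition is_bvpat :: "bvpat \<Rightarrow> bool" where
  "is_bvpat p = (case p of (\<sigma>, X, Y) \<Rightarrow>
     \<sigma> \<in> perms (length \<sigma>) \<and> X \<subseteq> {0..length \<sigma>} \<and> Y \<subseteq> {0..length \<sigma>})"

definition ext_seq :: "nat \<Rightarrow> nat list \<Rightarrow> nat \<Rightarrow> nat" where
  "ext_seq n xs x = (if x = 0 then 0 else if x = Suc (length xs) then n + 1 else xs ! (x - 1))"

definition contains :: "nat list \<Rightarrow> bvpat \<Rightarrow> bool" where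
  "contains \<pi> p = (case p of (\<sigma>, X, Y) \<Rightarrow>
     (let n = length \<pi>; k = length \<sigma> in
      \<exists>is. length is = k \<and> sorted_wrt (<) is \<and> set is \<subseteq> {1..n} \<and>
        (\<forall>a<k. \<forall>b<k. (\<pi> ! (is ! a - 1) < \<pi> ! (is ! b - 1)) \<longleftrightarrow> (\<sigma> ! a < \<sigma> ! b)) \<and>
        (let js = sort (map (\<lambda>a. \<pi> ! (is ! a - 1)) [0..<k]) in
          (\<forall>x\<in>X. ext_seq n is (x + 1) = ext_seq n is x + 1) \<and>
          (\<forall>y\<in>Y. ext_seq n js (y + 1) = ext_seq n js y + 1))))"

definition avoids :: "nat list \<Rightarrow> bvpat \<Rightarrow> bool" where
  "avoids \<pi> p = (\<not> contains \<pi> p)"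

definition av_count :: "nat \<Rightarrow> bvpat \<Rightarrow> nat" where
  "av_count n p = card {\<pi> \<in> perms n. avoids \<pi> p}"

definition perm_inv :: "nat list \<Rightarrow> nat list" where
  "perm_inv \<sigma> = map (\<lambda>v. Suc (THE a. a < length \<sigma> \<and> \<sigma> ! a = v)) [1..<Suc (length \<sigma>)]"

definition pat_i :: "bvpat \<Rightarrow> bvpat" where
  "pat_i p = (case p of (\<sigma>, X, Y) \<Rightarrow> (perm_inv \<sigma>, Y, X))"

definition pat_r :: "bvpat \<Rightarrow> bvpat" where
  "pat_r p = (case p of (\<sigma>, X, Y) \<Rightarrow> (rev \<sigma>, (\<lambda>x. length \<sigma> - x) ` X, Y))"

definition pat_c :: "bvpat \<Rightarrow> bvpat" where
  "pat_c p = (case p of (\<sigma>, X, Y) \<Rightarrow>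
     (map (\<lambda>v. Suc (length \<sigma>) - v) \<sigma>, X, (\<lambda>y. length \<sigma> - y) ` Y))"

inductive_set sym_class :: "bvpat \<Rightarrow> bvpat set" for p :: bvpat where
  base: "p \<in> sym_class p"
| inv: "q \<in> sym_class p \<Longrightarrow> pat_i q \<in> sym_class p"
| rev: "q \<in> sym_class p \<Longrightarrow> pat_r q \<in> sym_class p"
| comp: "q \<in> sym_class p \<Longrightarrow> pat_c q \<in> sym_class p"

end

theory Submission
  imports Defs "HOL-Combinatorics.Multiset_Permutations" "HOL-Combinatorics.Transposition"
begin

(* Every pattern in the two symmetry classes has length 2, one empty constraint set and the
   other a two-element subset of {0,1,2}.  Two such adjacency constraints pin an occurrence
   down completely: to two fixed positions a < b, or to two fixed values a < b (for instance
   Y = {0,2} forces the values 1 and n).  So pi contains p iff the comparison of pi_a with pi_b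
   (resp. the relative order of the values a and b in pi) comes out one particular way.
   Swapping the entries at positions a and b (resp. the values a and b) is an involution of
   S_n that reverses this comparison, hence exactly half of the n! permutations avoid p. *)

definition occurs_before :: "'a list \<Rightarrow> 'a \<Rightarrow> 'a \<Rightarrow> bool" where
  "occurs_before xs a b \<longleftrightarrow> (\<exists>i j. i < j \<and> j < length xs \<and> xs ! i = a \<and> xs ! j = b)"

lemma occurs_before_nth_iff:
  assumes "distinct xs" "i < length xs" "j < length xs"
  shows "occurs_before xs (xs ! i) (xs ! j) \<longleftrightarrow> i < j"
  using assms by (auto simp: occurs_before_def nth_eq_iff_index_eq)

lemma occurs_before_swap:
  assumes "distinct xs" "a \<in> set xs" "b \<in> set xs" "a \<noteq> b"
  shows "occurs_before xs b a \<longleftrightarrow> \<not> occurs_before xs a b"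
proof -
  obtain i j where "i < length xs" "j < length xs" "a = xs ! i" "b = xs ! j"
    using assms(2,3) by (auto simp: in_set_conv_nth)
  moreover from this have "i \<noteq> j"
    using assms(4) by blast
  ultimately show ?thesis
    using assms(1) by (auto simp: occurs_before_nth_iff)
qed

lemma occurs_before_map_transpose:
  "occurs_before (map (Transposition.transpose a b) xs) a b \<longleftrightarrow> occurs_before xs b a"
proof -
  have "Transposition.transpose a b y = a \<longleftrightarrow> y = b" "Transposition.transpose a b y = b \<longleftrightarrow> y = a"
    for y
    by (auto simp: transpose_eq_iff)
  then show ?thesis
    unfolding occurs_before_def by (metis (no_types, lifting) length_map nth_map order.strict_trans)
qed

lemma card_half_if_involution:
  assumes "finite S" "\<And>x. x \<in> S \<Longrightarrow> f x \<in> S" "\<And>x. x \<in> S \<Longrightarrow> f (f x) = x"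
    and "\<And>x. x \<in> S \<Longrightarrow> P (f x) \<longleftrightarrow> \<not> P x"
  shows "card {x \<in> S. P x} = card S div 2"
proof -
  have "bij_betw f {x \<in> S. P x} {x \<in> S. \<not> P x}"
    by (rule bij_betw_byWitness[where f' = f]) (use assms(2-4) in auto)
  then have "card {x \<in> S. P x} = card {x \<in> S. \<not> P x}"
    by (rule bij_betw_same_card)
  moreover have "card S = card {x \<in> S. P x} + card {x \<in> S. \<not> P x}"
    using assms(1) by (subst card_Un_disjoint[symmetric]) (auto intro: arg_cong[where f = card])
  ultimately show ?thesis
    by simp
qed

lemma perms_eq_permutations_of_set: "perms n = permutations_of_set {1..n}"
  by (auto simp: perms_def permutations_of_set_def)

lemma length_perms: "\<pi> \<in> perms n \<Longrightarrow> length \<pi> = n"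
  by (auto simp: perms_eq_permutations_of_set length_finite_permutations_of_set)

lemma card_perms_nth_less:
  assumes "i \<noteq> j" "i < n" "j < n"
  shows "card {\<pi> \<in> perms n. (\<pi> ! i < \<pi> ! j) = c} = fact n div 2"
proof -
  define swap :: "nat list \<Rightarrow> nat list" where "swap \<pi> = \<pi>[i := \<pi> ! j, j := \<pi> ! i]" for \<pi>
  have "card {\<pi> \<in> perms n. (\<pi> ! i < \<pi> ! j) = c} = card (perms n) div 2"
  proof (rule card_half_if_involution[where f = swap])
    fix \<pi> assume "\<pi> \<in> perms n"
    moreover from this have "length \<pi> = n" "\<pi> ! i \<noteq> \<pi> ! j"
      using assms by (auto simp: length_perms perms_def nth_eq_iff_index_eq)
    ultimately show "swap \<pi> \<in> perms n"
      using assms by (simp add: swap_def perms_def)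
    show "swap (swap \<pi>) = \<pi>"
      using \<open>length \<pi> = n\<close> assms by (simp add: swap_def list_eq_iff_nth_eq nth_list_update)
    have "swap \<pi> ! i = \<pi> ! j" "swap \<pi> ! j = \<pi> ! i"
      using \<open>length \<pi> = n\<close> assms by (simp_all add: swap_def nth_list_update)
    moreover have "\<pi> ! j < \<pi> ! i \<longleftrightarrow> \<not> \<pi> ! i < \<pi> ! j"
      using \<open>\<pi> ! i \<noteq> \<pi> ! j\<close> by linarith
    ultimately show "(swap \<pi> ! i < swap \<pi> ! j) = c \<longleftrightarrow> \<not> (\<pi> ! i < \<pi> ! j) = c"
      by simp blast
  qed (simp add: perms_eq_permutations_of_set)
  then show ?thesis
    by (simp add: perms_eq_permutations_of_set)
qed

lemma card_perms_occurs_before: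
  assumes "a \<noteq> b" "a \<in> {1..n}" "b \<in> {1..n}"
  shows "card {\<pi> \<in> perms n. occurs_before \<pi> a b = c} = fact n div 2"
proof -
  have "card {\<pi> \<in> perms n. occurs_before \<pi> a b = c} = card (perms n) div 2"
  proof (rule card_half_if_involution[where f = "map (Transposition.transpose a b)"])
    fix \<pi> assume "\<pi> \<in> perms n"
    then show "map (Transposition.transpose a b) \<pi> \<in> perms n"
      using assms by (simp add: perms_def distinct_map)
    from \<open>\<pi> \<in> perms n\<close> have "occurs_before \<pi> b a \<longleftrightarrow> \<not> occurs_before \<pi> a b"
      using assms by (intro occurs_before_swap) (auto simp: perms_def)
    then show
      "(occurs_before (map (Transposition.transpose a b) \<pi>) a b = c) \<longleftrightarrow> \<not> occurs_before \<pi> a b = c"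
      by (simp add: occurs_before_map_transpose) blast
  qed (simp_all add: perms_eq_permutations_of_set)
  then show ?thesis
    by (simp add: perms_eq_permutations_of_set)
qed

definition pair_constraints :: "nat set set" where
  "pair_constraints = {{0, 1}, {1, 2}, {0, 2}}"

definition rigid_patterns :: "bvpat set" where
  "rigid_patterns = {(\<sigma>, X, Y). \<sigma> \<in> {[1, 2], [2, 1]} \<and>
     (X = {} \<and> Y \<in> pair_constraints \<or> Y = {} \<and> X \<in> pair_constraints)}"

lemma sym_class_subset:
  assumes "p \<in> S"
    and "\<And>q. q \<in> S \<Longrightarrow> pat_i q \<in> S" "\<And>q. q \<in> S \<Longrightarrow> pat_r q \<in> S"
    and "\<And>q. q \<in> S \<Longrightarrow> pat_c q \<in> S"
  shows "sym_class p \<subseteq> S"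
proof
  fix q assume "q \<in> sym_class p"
  then show "q \<in> S" by induction (use assms in auto)
qed

lemma the_index_nth:
  assumes "distinct xs" "i < length xs"
  shows "(THE j. j < length xs \<and> xs ! j = xs ! i) = i"
  using assms by (auto simp: nth_eq_iff_index_eq)

lemma perm_inv_12: "perm_inv [1, 2] = [1, 2]"
  using the_index_nth[of "[1, 2 :: nat]" 0] the_index_nth[of "[1, 2 :: nat]" 1]
  by (simp add: perm_inv_def upt_rec numeral_2_eq_2)

lemma perm_inv_21: "perm_inv [2, 1] = [2, 1]"
  using the_index_nth[of "[2, 1 :: nat]" 0] the_index_nth[of "[2, 1 :: nat]" 1]
  by (simp add: perm_inv_def upt_rec numeral_2_eq_2)

lemma pair_constraints_mirror: "Z \<in> pair_constraints \<Longrightarrow> (\<lambda>z. 2 - z) ` Z \<in> pair_constraints"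
  by (auto simp: pair_constraints_def)

lemma rigid_patterns_closed:
  assumes "q \<in> rigid_patterns"
  shows "pat_i q \<in> rigid_patterns" "pat_r q \<in> rigid_patterns" "pat_c q \<in> rigid_patterns"
  using assms
  by (auto simp: rigid_patterns_def pat_i_def pat_r_def pat_c_def
      perm_inv_12[simplified] perm_inv_21[simplified] pair_constraints_mirror[unfolded numeral_2_eq_2])

definition adjacent_at :: "nat \<Rightarrow> nat list \<Rightarrow> nat set \<Rightarrow> bool" where
  "adjacent_at n xs Z \<longleftrightarrow> (\<forall>z\<in>Z. ext_seq n xs (z + 1) = ext_seq n xs z + 1)"

lemma adjacent_at_empty [simp]: "adjacent_at n xs {}"
  by (simp add: adjacent_at_def)

lemma contains_length2_iff:
  assumes "length \<sigma> = 2"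
  shows "contains \<pi> (\<sigma>, X, Y) \<longleftrightarrow> (\<exists>i j. i < j \<and> j < length \<pi> \<and>
    (\<pi> ! i < \<pi> ! j \<longleftrightarrow> \<sigma> ! 0 < \<sigma> ! 1) \<and> (\<pi> ! j < \<pi> ! i \<longleftrightarrow> \<sigma> ! 1 < \<sigma> ! 0) \<and>
    adjacent_at (length \<pi>) [Suc i, Suc j] X \<and> adjacent_at (length \<pi>) (sort [\<pi> ! i, \<pi> ! j]) Y)"
proof -
  have pairs: "(\<exists>xs. length xs = 2 \<and> sorted_wrt (<) xs \<and> set xs \<subseteq> {1..n} \<and> R xs) \<longleftrightarrow>
      (\<exists>i j. i < j \<and> j < n \<and> R [Suc i, Suc j])" for n and R :: "nat list \<Rightarrow> bool"
  proof
    assume "\<exists>xs. length xs = 2 \<and> sorted_wrt (<) xs \<and> set xs \<subseteq> {1..n} \<and> R xs"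
    then obtain a b where "a < b" "set [a, b] \<subseteq> {1..n}" "R [a, b]"
      by (auto simp: length_Suc_conv numeral_2_eq_2)
    then show "\<exists>i j. i < j \<and> j < n \<and> R [Suc i, Suc j]"
      by (intro exI[of _ "a - 1"] exI[of _ "b - 1"]) auto
  next
    assume "\<exists>i j. i < j \<and> j < n \<and> R [Suc i, Suc j]"
    then obtain i j where "i < j" "j < n" "R [Suc i, Suc j]"
      by blast
    then show "\<exists>xs. length xs = 2 \<and> sorted_wrt (<) xs \<and> set xs \<subseteq> {1..n} \<and> R xs"
      by (intro exI[of _ "[Suc i, Suc j]"]) auto
  qed
  have map2: "map f [0..<2] = [f 0, f 1]" for f :: "nat \<Rightarrow> nat"
    by (simp add: numeral_2_eq_2 upt_rec)
  have all2: "(\<forall>a<(2::nat). P a) \<longleftrightarrow> P 0 \<and> P 1" for P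
    by (auto simp: numeral_2_eq_2 less_Suc_eq)
  show ?thesis
    using assms unfolding contains_def adjacent_at_def
    by (simp only: prod.case Let_def pairs map2) (simp add: all2)
qed

lemma contains_length2_distinct_iff:
  assumes "\<sigma> \<in> {[1, 2], [2, 1]}" "distinct \<pi>"
  shows "contains \<pi> (\<sigma>, X, Y) \<longleftrightarrow> (\<exists>i j. i < j \<and> j < length \<pi> \<and>
    (\<pi> ! i < \<pi> ! j) = (\<sigma> = [1, 2]) \<and>
    adjacent_at (length \<pi>) [Suc i, Suc j] X \<and> adjacent_at (length \<pi>) (sort [\<pi> ! i, \<pi> ! j]) Y)"
proof -
  from assms(1) consider "\<sigma> = [1, 2]" | "\<sigma> = [2, 1]"
    by blast
  note \<sigma>_cases = this
  then have "length \<sigma> = 2"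
    by cases auto
  moreover have "(u < v \<longleftrightarrow> \<sigma> ! 0 < \<sigma> ! 1) \<and> (v < u \<longleftrightarrow> \<sigma> ! 1 < \<sigma> ! 0) \<longleftrightarrow> (u < v) = (\<sigma> = [1, 2])"
    if "u \<noteq> v" for u v :: nat
    using \<sigma>_cases that by cases auto
  moreover have "\<pi> ! i \<noteq> \<pi> ! j" if "i < j" "j < length \<pi>" for i j
    using that assms(2) by (simp add: nth_eq_iff_index_eq)
  ultimately show ?thesis
    by (simp only: contains_length2_iff) (intro iff_exI, blast)
qed

(* 0 \<in> Z pins the first entry to 1, 2 \<in> Z pins the second to n, and 1 \<in> Z makes the two
   entries consecutive, which determines the remaining one. *)
definition forced_pair :: "nat \<Rightarrow> nat set \<Rightarrow> nat \<times> nat" where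
  "forced_pair n Z = (if 0 \<in> Z then 1 else n - 1, if 2 \<in> Z then n else 2)"

lemma adjacent_at_pair_iff:
  assumes "Z \<in> pair_constraints" "1 \<le> i" "i < j" "j \<le> n"
  shows "adjacent_at n [i, j] Z \<longleftrightarrow> (i, j) = forced_pair n Z"
proof -
  from assms(1) consider "Z = {0, 1}" | "Z = {1, 2}" | "Z = {0, 2}"
    unfolding pair_constraints_def by blast
  then show ?thesis
    using assms(2-4) by cases (auto simp: forced_pair_def adjacent_at_def ext_seq_def)
qed

lemma forced_pair_bounds:
  assumes "Z \<in> pair_constraints" "forced_pair n Z = (i, j)" "2 \<le> n"
  shows "1 \<le> i \<and> i < j \<and> j \<le> n"
  using assms by (auto simp: pair_constraints_def forced_pair_def)

lemma av_count_position_pattern: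
  assumes "\<sigma> \<in> {[1, 2], [2, 1]}" "X \<in> pair_constraints" "2 \<le> n"
  shows "av_count n (\<sigma>, X, {}) = fact n div 2"
proof -
  obtain a b where ab: "forced_pair n X = (a, b)"
    by fastforce
  with assms have bounds: "1 \<le> a" "a < b" "b \<le> n"
    using forced_pair_bounds by blast+
  have "contains \<pi> (\<sigma>, X, {}) \<longleftrightarrow> (\<pi> ! (a - 1) < \<pi> ! (b - 1)) = (\<sigma> = [1, 2])"
    if "\<pi> \<in> perms n" for \<pi>
  proof -
    from that have "length \<pi> = n" "distinct \<pi>"
      by (auto simp: length_perms perms_def)
    then have "contains \<pi> (\<sigma>, X, {}) \<longleftrightarrow>
        (\<exists>i j. i < j \<and> j < n \<and> (\<pi> ! i < \<pi> ! j) = (\<sigma> = [1, 2]) \<and> i = a - 1 \<and> j = b - 1)"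
      unfolding contains_length2_distinct_iff[OF assms(1) \<open>distinct \<pi>\<close>] \<open>length \<pi> = n\<close>
      using adjacent_at_pair_iff[OF assms(2)] ab bounds by (intro iff_exI) auto
    also have "\<dots> \<longleftrightarrow> (\<pi> ! (a - 1) < \<pi> ! (b - 1)) = (\<sigma> = [1, 2])"
      using bounds by auto
    finally show ?thesis .
  qed
  then have "{\<pi> \<in> perms n. avoids \<pi> (\<sigma>, X, {})} =
      {\<pi> \<in> perms n. (\<pi> ! (a - 1) < \<pi> ! (b - 1)) = (\<sigma> \<noteq> [1, 2])}"
    unfolding avoids_def by auto
  then show ?thesis
    unfolding av_count_def using bounds by (simp add: card_perms_nth_less)
qed

lemma av_count_value_pattern:
  assumes "\<sigma> \<in> {[1, 2], [2, 1]}" "Y \<in> pair_constraints" "2 \<le> n"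
  shows "av_count n (\<sigma>, {}, Y) = fact n div 2"
proof -
  obtain a b where ab: "forced_pair n Y = (a, b)"
    by fastforce
  with assms have bounds: "1 \<le> a" "a < b" "b \<le> n"
    using forced_pair_bounds by blast+
  have "contains \<pi> (\<sigma>, {}, Y) \<longleftrightarrow> occurs_before \<pi> a b = (\<sigma> = [1, 2])"
    if "\<pi> \<in> perms n" for \<pi>
  proof -
    from that have \<pi>: "length \<pi> = n" "distinct \<pi>" "set \<pi> = {1..n}"
      by (auto simp: length_perms perms_def)
    define c where "c = (if \<sigma> = [1, 2] then a else b)"
    define d where "d = (if \<sigma> = [1, 2] then b else a)"
    have key: "(\<pi> ! i < \<pi> ! j) = (\<sigma> = [1, 2]) \<and> adjacent_at n (sort [\<pi> ! i, \<pi> ! j]) Y \<longleftrightarrow>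
        \<pi> ! i = c \<and> \<pi> ! j = d" if "i < j" "j < n" for i j
    proof -
      have "\<pi> ! i \<in> {1..n}" "\<pi> ! j \<in> {1..n}" "\<pi> ! i \<noteq> \<pi> ! j"
        using that \<pi> by (auto simp: nth_eq_iff_index_eq)
      then show ?thesis
        using adjacent_at_pair_iff[OF assms(2)] ab bounds c_def d_def
        by (cases "\<pi> ! i < \<pi> ! j") (auto split: if_splits)
    qed
    have "contains \<pi> (\<sigma>, {}, Y) \<longleftrightarrow> occurs_before \<pi> c d"
      unfolding contains_length2_distinct_iff[OF assms(1) \<pi>(2)] occurs_before_def \<pi>(1)
      using key adjacent_at_empty by (intro iff_exI) blast
    also have "\<dots> \<longleftrightarrow> occurs_before \<pi> a b = (\<sigma> = [1, 2])"
      using \<pi> bounds occurs_before_swap[of \<pi> a b] c_def d_def by (auto split: if_splits)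
    finally show ?thesis .
  qed
  then have "{\<pi> \<in> perms n. avoids \<pi> (\<sigma>, {}, Y)} =
      {\<pi> \<in> perms n. occurs_before \<pi> a b = (\<sigma> \<noteq> [1, 2])}"
    unfolding avoids_def by auto
  then show ?thesis
    unfolding av_count_def using bounds by (simp add: card_perms_occurs_before)
qed

lemma av_count_rigid_pattern:
  assumes "p \<in> rigid_patterns" "2 \<le> n"
  shows "av_count n p = fact n div 2"
  using assms av_count_position_pattern av_count_value_pattern
  unfolding rigid_patterns_def by auto

theorem mainTheorem3:
  fixes p :: bvpat and n :: nat
  assumes "p \<in> sym_class ([1,2], {}, {0,1}) \<or> p \<in> sym_class ([1,2], {}, {0,2})"
    and "n \<ge> 2"
  shows "av_count n p = fact n div 2"
proof -
  have "([1, 2], {}, {0, 1}) \<in> rigid_patterns" "([1, 2], {}, {0, 2}) \<in> rigid_patterns"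
    by (simp_all add: rigid_patterns_def pair_constraints_def)
  then have "p \<in> rigid_patterns"
    using assms(1) sym_class_subset[OF _ rigid_patterns_closed] by blast
  then show ?thesis
    using assms(2) by (rule av_count_rigid_pattern)
qed

end
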